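(* With splitting parameter $\gamma=2$ and fixed $N$ and $h=L/N$, the coefficients of the two-dimensional scheme satisfy $$\lim_{\alpha\to2^-}c_{2,\alpha}a_{10}=\lim_{\alpha\to2^-}c_{2,\alpha}a_{01}=\frac1{h^2},\qquad \lim_{\alpha\to2^-}c_{2,\alpha}a_{mn}=0\ \text{ for } m,n\ge0,\ m+n>1,\qquad \lim_{\alpha\to2^-}c_{2,\alpha}a_{00}=-\frac4{h^2}.$$ Moreover $\lim_{\alpha\to2^-}c_{2,\alpha}\int_{I_{00}}|\boldsymbol{\xi}|^{-\alpha}d\boldsymbol{\xi}=1$ and $\lim_{\alpha\to2^-}c_{2,\alpha}=0$. Consequently, the scheme reduces in this limit to the five-point central difference scheme for $-\Delta$.
   Context: $c_{2,\alpha}=\frac{2^{\alpha-1}\alpha\,\Gamma((2+\alpha)/2)}{\pi\,\Gamma(1-\alpha/2)}$. Let $L>0$, $N$ a positive integer, $h=L/N$, $\boldsymbol{\xi}_{mn}=(mh,nh)$, $I_{ij}=[ih,(i+1)h]\times[jh,(j+1)h]$, $D_1=(0,L)^2$, $D_2=[0,\infty)^2\setminus D_1$, and $T_{mn}=\big(I_{(m-1)(n-1)}\cup I_{(m-1)n}\cup I_{m(n-1)}\cup I_{mn}\big)\cap D_1$ (cells with negative index being empty). For $m,n\ge0$, $m+n>0$, with $\sigma(m,n)$ the number of zeros among $m,n$, $\bar c_{10}=\bar c_{01}=1$, $\bar c_{11}=-1$, $\bar c_{mn}=0$ otherwise, the coefficients are (for $\gamma=2$) $$a_{mn}=\frac{2^{\sigma(m,n)}}{4|\boldsymbol{\xi}_{mn}|^{2}}\Big(\int_{T_{mn}}|\boldsymbol{\xi}|^{-\alpha}d\boldsymbol{\xi}+\bar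 c_{mn}\int_{I_{00}}|\boldsymbol{\xi}|^{-\alpha}d\boldsymbol{\xi}\Big),$$ and $a_{00}=-2\sum_{m=1}^N(a_{m0}+a_{0m})-4\sum_{m,n=1}^Na_{mn}-4\int_{D_2}|\boldsymbol{\xi}|^{-(2+\alpha)}d\boldsymbol{\xi}$. The scheme is $(-\Delta)^{\alpha/2}_{h,2}u_{ij}=-c_{2,\alpha}\sum a_{|m||n|}u_{(i+m)(j+n)}$, summed over grid offsets $(m,n)$ with $(i+m,j+n)$ an interior grid index. *)

theory Defs
  imports "HOL-Analysis.Analysis"
begin

definition c2 :: "real \<Rightarrow> real" where
  "c2 \<alpha> = 2 powr (\<alpha> - 1) * \<alpha> * Gamma ((2 + \<alpha>) / 2) / (pi * Gamma (1 - \<alpha> / 2))"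

definition cell :: "real \<Rightarrow> int \<Rightarrow> int \<Rightarrow> (real \<times> real) set" where
  "cell h i j = (if i < 0 \<or> j < 0 then {}
     else {of_int i * h .. (of_int i + 1) * h} \<times> {of_int j * h .. (of_int j + 1) * h})"

definition D1 :: "real \<Rightarrow> (real \<times> real) set" where
  "D1 L = {0<..<L} \<times> {0<..<L}"

definition D2 :: "real \<Rightarrow> (real \<times> real) set" where
  "D2 L = ({0..} \<times> {0..}) - D1 L"

definition Tcell :: "real \<Rightarrow> real \<Rightarrow> nat \<Rightarrow> nat \<Rightarrow> (real \<times> real) set" where
  "Tcell L h m n = (cell h (int m - 1) (int n - 1) \<union> cell h (int m - 1) (int n)
      \<union> cell h (int m) (int n - 1) \<union> cell h (int m) (int n)) \<inter> D1 L"

definition sigma_zeros :: "nat \<Rightarrow> nat \<Rightarrow> nat" where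
  "sigma_zeros m n = (if m = 0 then 1 else 0) + (if n = 0 then 1 else 0)"

definition cbar :: "nat \<Rightarrow> nat \<Rightarrow> real" where
  "cbar m n = (if (m, n) = (1, 0) \<or> (m, n) = (0, 1) then 1
               else if (m, n) = (1, 1) then -1 else 0)"

definition Kint :: "real \<Rightarrow> (real \<times> real) set \<Rightarrow> real" where
  "Kint \<alpha> S = (LINT \<xi>:S|lborel. norm \<xi> powr (-\<alpha>))"

text \<open>Coefficients a_{mn} (m+n>0) for gamma = 2, with h = L/N.\<close>
definition acoef :: "real \<Rightarrow> real \<Rightarrow> nat \<Rightarrow> nat \<Rightarrow> nat \<Rightarrow> real" where
  "acoef \<alpha> L N m n =
     (let h = L / real N in
      2 ^ sigma_zeros m n / (4 * ((real m * h)\<^sup>2 + (real n * h)\<^sup>2))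
        * (Kint \<alpha> (Tcell L h m n) + cbar m n * Kint \<alpha> (cell h 0 0)))"

definition a00 :: "real \<Rightarrow> real \<Rightarrow> nat \<Rightarrow> real" where
  "a00 \<alpha> L N =
     - 2 * (\<Sum>m=1..N. acoef \<alpha> L N m 0 + acoef \<alpha> L N 0 m)
     - 4 * (\<Sum>m=1..N. \<Sum>n=1..N. acoef \<alpha> L N m n)
     - 4 * (LINT \<xi>:D2 L|lborel. norm \<xi> powr (-(2 + \<alpha>)))"

definition acoeff :: "real \<Rightarrow> real \<Rightarrow> nat \<Rightarrow> nat \<Rightarrow> nat \<Rightarrow> real" where
  "acoeff \<alpha> L N m n = (if m = 0 \<and> n = 0 then a00 \<alpha> L N else acoef \<alpha> L N m n)"

definition grid_interior :: "nat \<Rightarrow> (int \<times> int) set" where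
  "grid_interior N = {1 .. int N - 1} \<times> {1 .. int N - 1}"

definition scheme :: "real \<Rightarrow> real \<Rightarrow> nat \<Rightarrow> (int \<Rightarrow> int \<Rightarrow> real) \<Rightarrow> int \<Rightarrow> int \<Rightarrow> real" where
  "scheme \<alpha> L N u i j =
     - c2 \<alpha> * (\<Sum>(p, q)\<in>grid_interior N.
         acoeff \<alpha> L N (nat \<bar>p - i\<bar>) (nat \<bar>q - j\<bar>) * u p q)"

end

theory Submission
  imports Defs
begin

text \<open>Write \<open>c2 \<alpha> = (2 - \<alpha>) c2_regular \<alpha>\<close> with \<open>c2_regular \<alpha> \<rightarrow> 2/\<pi>\<close>. The integral of
  \<open>|\<xi>|^-\<alpha>\<close> over the corner cell \<open>[0,h]\<^sup>2\<close> is \<open>(\<pi>/2) h^(2-\<alpha>)/(2-\<alpha>)\<close> up to a factor in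
  \<open>[1, \<surd>2^(2-\<alpha>)]\<close>: on the triangle \<open>0 \<le> y \<le> x\<close> the kernel lies between \<open>x^-\<alpha>/(1+(y/x)\<^sup>2)\<close>
  and \<open>\<surd>2^(2-\<alpha>)\<close> times it, and the inner integral of \<open>1/(1+(y/x)\<^sup>2)\<close> is \<open>x \<pi>/4\<close>.
  Hence \<open>c2 \<alpha>\<close> times the kernel integral tends to 1 on every set of the quadrant that differs
  from \<open>[0,h]\<^sup>2\<close> only away from the origin, whereas the integrals over sets bounded away from the
  origin, and the tail integral over \<open>D2\<close>, stay bounded and are killed by \<open>c2 \<alpha> \<rightarrow> 0\<close>.
  The coefficients \<open>cbar\<close> make the two unit contributions cancel in \<open>a\<^sub>1\<^sub>1\<close> and double in
  \<open>a\<^sub>1\<^sub>0, a\<^sub>0\<^sub>1\<close>, which leaves exactly the five-point stencil.\<close>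

section \<open>The normalising constant\<close>

definition c2_regular :: "real \<Rightarrow> real" where
  "c2_regular \<alpha> = 2 powr (\<alpha> - 1) * \<alpha> * Gamma ((2 + \<alpha>) / 2) / (2 * pi * Gamma (2 - \<alpha> / 2))"

lemma c2_eq_regular:
  assumes "\<alpha> < 2"
  shows "c2 \<alpha> = (2 - \<alpha>) * c2_regular \<alpha>"
proof -
  have "1 - \<alpha>/2 \<notin> \<int>\<^sub>\<le>\<^sub>0" using assms by (auto simp: nonpos_Ints_def)
  from Gamma_plus1[OF this] have Gamma_shift: "Gamma (2 - \<alpha>/2) = (1 - \<alpha>/2) * Gamma (1 - \<alpha>/2)"
    by (simp add: algebra_simps)
  have "Gamma (1 - \<alpha>/2) > 0" using assms by simp
  then show ?thesis
    unfolding c2_def c2_regular_def Gamma_shift using assms by (simp add: divide_simps)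
qed

lemma tendsto_c2_regular: "(c2_regular \<longlongrightarrow> 2 / pi) (at_left 2)"
proof -
  have "isCont c2_regular 2" unfolding c2_regular_def
    by (intro continuous_intros) (auto simp: nonpos_Ints_def)
  moreover have "c2_regular 2 = 2 / pi"
    using Gamma_plus1[of 1] by (simp add: c2_regular_def)
  ultimately show ?thesis
    by (metis continuous_at_split continuous_within)
qed

lemma eventually_at_left_2: "eventually (\<lambda>\<alpha>. 1 < \<alpha> \<and> \<alpha> < 2) (at_left (2::real))"
  by (auto simp: eventually_at_left_field intro!: exI[of _ 1])

lemma eventually_c2_eq_regular:
  "eventually (\<lambda>\<alpha>. c2 \<alpha> = (2 - \<alpha>) * c2_regular \<alpha>) (at_left 2)"
  using eventually_at_left_2 by eventually_elim (simp add: c2_eq_regular)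

lemma tendsto_c2_zero: "(c2 \<longlongrightarrow> 0) (at_left 2)"
proof -
  have "((\<lambda>\<alpha>. (2 - \<alpha>) * c2_regular \<alpha>) \<longlongrightarrow> (2 - 2) * (2 / pi)) (at_left 2)"
    by (intro tendsto_intros tendsto_c2_regular)
  then show ?thesis
    using eventually_c2_eq_regular by (simp add: tendsto_cong)
qed

lemma c2_pos:
  assumes "0 < \<alpha>" "\<alpha> < 2"
  shows "0 < c2 \<alpha>"
  using assms unfolding c2_def by (intro divide_pos_pos mult_pos_pos) auto

lemma tendsto_c2_mult_zero:
  assumes bounds: "eventually (\<lambda>\<alpha>. 0 \<le> f \<alpha> \<and> f \<alpha> \<le> g \<alpha>) (at_left 2)"
    and g: "(g \<longlongrightarrow> l) (at_left 2)"
  shows "((\<lambda>\<alpha>. c2 \<alpha> * f \<alpha>) \<longlongrightarrow> 0) (at_left 2)"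
proof (rule tendsto_sandwich)
  have "eventually (\<lambda>\<alpha>. 0 < c2 \<alpha> \<and> 0 \<le> f \<alpha> \<and> f \<alpha> \<le> g \<alpha>) (at_left 2)"
    using bounds eventually_at_left_2 by eventually_elim (auto intro: c2_pos)
  then show "eventually (\<lambda>\<alpha>. 0 \<le> c2 \<alpha> * f \<alpha>) (at_left 2)"
    and "eventually (\<lambda>\<alpha>. c2 \<alpha> * f \<alpha> \<le> c2 \<alpha> * g \<alpha>) (at_left 2)"
    by (auto elim!: eventually_mono intro: mult_left_mono)
  have "((\<lambda>\<alpha>. c2 \<alpha> * g \<alpha>) \<longlongrightarrow> 0 * l) (at_left 2)"
    by (intro tendsto_intros tendsto_c2_zero g)
  then show "((\<lambda>\<alpha>. c2 \<alpha> * g \<alpha>) \<longlongrightarrow> 0) (at_left 2)" by simp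
qed simp

definition kernel_nn :: "real \<Rightarrow> (real \<times> real) set \<Rightarrow> ennreal" where
  "kernel_nn \<alpha> A = (\<integral>\<^sup>+ \<xi>. ennreal (norm \<xi> powr -\<alpha>) * indicator A \<xi> \<partial>lborel)"

lemma Kint_eq_enn2real:
  assumes "A \<in> sets lborel"
  shows "Kint \<alpha> A = enn2real (kernel_nn \<alpha> A)"
proof -
  have "Kint \<alpha> A = integral\<^sup>L lborel (\<lambda>\<xi>. indicator A \<xi> *\<^sub>R norm \<xi> powr -\<alpha>)"
    unfolding Kint_def set_lebesgue_integral_def by simp
  also have "\<dots> = enn2real (\<integral>\<^sup>+ \<xi>. ennreal (indicator A \<xi> *\<^sub>R norm \<xi> powr -\<alpha>) \<partial>lborel)"
    using assms by (intro integral_eq_nn_integral) auto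
  also have "(\<integral>\<^sup>+ \<xi>. ennreal (indicator A \<xi> *\<^sub>R norm \<xi> powr -\<alpha>) \<partial>lborel) = kernel_nn \<alpha> A"
    unfolding kernel_nn_def by (intro nn_integral_cong) (auto split: split_indicator)
  finally show ?thesis .
qed

lemma Kint_nonneg: "0 \<le> Kint \<alpha> A"
  unfolding Kint_def set_lebesgue_integral_def by simp

lemma Kint_le_if_kernel_nn_le:
  assumes "A \<in> sets lborel" "kernel_nn \<alpha> A \<le> ennreal B" "0 \<le> B"
  shows "Kint \<alpha> A \<le> B"
  using assms by (simp add: Kint_eq_enn2real enn2real_leI)

lemma kernel_nn_mono: "A \<subseteq> B \<Longrightarrow> kernel_nn \<alpha> A \<le> kernel_nn \<alpha> B"
  unfolding kernel_nn_def by (intro nn_integral_mono) (auto split: split_indicator)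

lemma kernel_nn_Un:
  assumes "A \<in> sets lborel" "B \<in> sets lborel" "A \<inter> B = {}"
  shows "kernel_nn \<alpha> (A \<union> B) = kernel_nn \<alpha> A + kernel_nn \<alpha> B"
  unfolding kernel_nn_def using assms
  by (subst nn_integral_add[symmetric]) (auto intro!: nn_integral_cong split: split_indicator)

lemma Kint_split:
  assumes "A \<in> sets lborel" "B \<in> sets lborel"
    and "kernel_nn \<alpha> (A \<inter> B) < top" "kernel_nn \<alpha> (A - B) < top"
  shows "Kint \<alpha> A = Kint \<alpha> (A \<inter> B) + Kint \<alpha> (A - B)"
proof -
  have "kernel_nn \<alpha> A = kernel_nn \<alpha> ((A \<inter> B) \<union> (A - B))" by (simp add: Int_Diff_Un)
  also have "\<dots> = kernel_nn \<alpha> (A \<inter> B) + kernel_nn \<alpha> (A - B)"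
    using assms(1,2) by (intro kernel_nn_Un) auto
  finally show ?thesis
    using assms by (simp add: Kint_eq_enn2real enn2real_plus)
qed

lemma nn_integral_lborel_pair_fst:
  fixes F :: "real \<times> real \<Rightarrow> ennreal"
  assumes "F \<in> borel_measurable borel"
  shows "(\<integral>\<^sup>+ \<xi>. F \<xi> \<partial>lborel) = (\<integral>\<^sup>+ x. \<integral>\<^sup>+ y. F (x, y) \<partial>lborel \<partial>lborel)"
proof -
  have "F \<in> borel_measurable (lborel \<Otimes>\<^sub>M lborel)" using assms by (simp add: lborel_prod)
  from lborel.nn_integral_fst[OF this] show ?thesis by (simp add: lborel_prod)
qed

lemma nn_integral_lborel_pair_snd:
  fixes F :: "real \<times> real \<Rightarrow> ennreal"
  assumes "F \<in> borel_measurable borel"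
  shows "(\<integral>\<^sup>+ \<xi>. F \<xi> \<partial>lborel) = (\<integral>\<^sup>+ y. \<integral>\<^sup>+ x. F (x, y) \<partial>lborel \<partial>lborel)"
proof -
  have "F \<in> borel_measurable (lborel \<Otimes>\<^sub>M lborel)" using assms by (simp add: lborel_prod)
  from lborel_pair.nn_integral_snd[OF this] show ?thesis by (simp add: lborel_prod)
qed

lemma nn_integral_powr_interval:
  assumes "0 \<le> h" "\<alpha> < 2" "0 \<le> c"
  shows "(\<integral>\<^sup>+ x. ennreal (c * x powr (1 - \<alpha>)) * indicator {0..h} x \<partial>lborel)
         = ennreal (c * (h powr (2 - \<alpha>) / (2 - \<alpha>)))"
proof -
  have "((\<lambda>x. x powr (1 - \<alpha>)) has_integral (h powr (1 - \<alpha> + 1) / (1 - \<alpha> + 1))) {0..h}"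
    using assms by (intro has_integral_powr_from_0) auto
  then have "((\<lambda>x. c * x powr (1 - \<alpha>)) has_integral c * (h powr (2 - \<alpha>) / (2 - \<alpha>))) {0..h}"
    by (intro has_integral_mult_right) (simp add: algebra_simps)
  from nn_integral_has_integral_lebesgue'[OF _ this] assms(3) show ?thesis by simp
qed

section \<open>The corner cell\<close>

definition kernel_row :: "real \<Rightarrow> real \<Rightarrow> ennreal" where
  "kernel_row \<alpha> x = (\<integral>\<^sup>+ y. ennreal (norm (x, y) powr -\<alpha>) * indicator {0..x} y \<partial>lborel)"

definition kernel_triangle :: "real \<Rightarrow> real \<Rightarrow> ennreal" where
  "kernel_triangle \<alpha> h = (\<integral>\<^sup>+ x. kernel_row \<alpha> x * indicator {0..h} x \<partial>lborel)"

lemma has_integral_inverse_one_plus_square: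
  assumes "x > 0"
  shows "((\<lambda>y. 1 / (1 + (y / x)\<^sup>2)) has_integral x * (pi / 4)) {0..x}"
proof -
  have "((\<lambda>y. 1 / (1 + (y / x)\<^sup>2)) has_integral (x * arctan (x / x) - x * arctan (0 / x))) {0..x}"
  proof (rule fundamental_theorem_of_calculus)
    fix y assume "y \<in> {0..x}"
    have "((\<lambda>y. x * arctan (y / x)) has_real_derivative x * (1 / (1 + (y / x)\<^sup>2) * (1 / x))) (at y)"
      by (auto intro!: derivative_eq_intros simp: inverse_eq_divide)
    then show "((\<lambda>y. x * arctan (y / x)) has_vector_derivative 1 / (1 + (y / x)\<^sup>2)) (at y within {0..x})"
      using assms by (auto simp: has_real_derivative_iff_has_vector_derivative[symmetric]
          intro: has_field_derivative_at_within)
  qed (use assms in simp)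
  then show ?thesis using assms by (simp add: arctan_one)
qed

lemma norm_powr_triangle_bounds:
  assumes "x > 0" "0 \<le> y" "y \<le> x" "0 \<le> \<alpha>" "\<alpha> \<le> 2"
  shows "x powr -\<alpha> * (1 / (1 + (y / x)\<^sup>2)) \<le> norm (x, y) powr -\<alpha>"
    and "norm (x, y) powr -\<alpha> \<le> sqrt 2 powr (2 - \<alpha>) * (x powr -\<alpha> * (1 / (1 + (y / x)\<^sup>2)))"
proof -
  define s where "s = sqrt (1 + (y / x)\<^sup>2)"
  have s1: "1 \<le> s" unfolding s_def by simp
  have s2: "s \<le> sqrt 2" unfolding s_def using assms by (simp add: power_le_one)
  have s_powr: "s powr -2 = 1 / (1 + (y / x)\<^sup>2)"
    unfolding s_def by (simp add: powr_minus powr_realpow inverse_eq_divide add_pos_nonneg)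
  have "norm (x, y) = sqrt (x\<^sup>2 * (1 + (y / x)\<^sup>2))"
    using assms by (simp add: norm_Pair field_simps)
  also have "\<dots> = x * s" unfolding s_def using assms by (simp add: real_sqrt_mult)
  finally have norm_powr: "norm (x, y) powr -\<alpha> = x powr -\<alpha> * s powr -\<alpha>"
    using assms s1 by (simp add: powr_mult)
  have "s powr -2 \<le> s powr -\<alpha>" using s1 assms by (intro powr_mono) auto
  then show "x powr -\<alpha> * (1 / (1 + (y / x)\<^sup>2)) \<le> norm (x, y) powr -\<alpha>"
    unfolding norm_powr s_powr[symmetric] by (simp add: mult_left_mono)
  have "s powr -\<alpha> = s powr (2 - \<alpha>) * s powr -2" by (simp add: powr_add[symmetric])
  also have "\<dots> \<le> sqrt 2 powr (2 - \<alpha>) * s powr -2"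
    using s1 s2 assms by (intro mult_right_mono powr_mono2) auto
  finally show "norm (x, y) powr -\<alpha> \<le> sqrt 2 powr (2 - \<alpha>) * (x powr -\<alpha> * (1 / (1 + (y / x)\<^sup>2)))"
    unfolding norm_powr s_powr[symmetric]
    using mult_left_mono[of "s powr -\<alpha>" "sqrt 2 powr (2 - \<alpha>) * s powr -2" "x powr -\<alpha>"]
    by (simp add: mult_ac)
qed

lemma nn_integral_row_comparison:
  assumes "x > 0"
  shows "(\<integral>\<^sup>+ y. ennreal (x powr -\<alpha> * (1 / (1 + (y / x)\<^sup>2))) * indicator {0..x} y \<partial>lborel)
     = ennreal (x powr (1 - \<alpha>) * (pi / 4))"
proof -
  have "((\<lambda>y. x powr -\<alpha> * (1 / (1 + (y / x)\<^sup>2))) has_integral x powr -\<alpha> * (x * (pi / 4))) {0..x}"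
    by (intro has_integral_mult_right has_integral_inverse_one_plus_square assms)
  from nn_integral_has_integral_lebesgue'[OF _ this]
  have "(\<integral>\<^sup>+ y. ennreal (x powr -\<alpha> * (1 / (1 + (y / x)\<^sup>2))) * indicator {0..x} y \<partial>lborel)
     = ennreal (x powr -\<alpha> * (x * (pi / 4)))" by (simp add: add_pos_nonneg)
  also have "x powr -\<alpha> * (x * (pi / 4)) = x powr (1 - \<alpha>) * (pi / 4)"
    using assms by (simp add: powr_diff powr_minus field_simps)
  finally show ?thesis .
qed

lemma kernel_row_bounds:
  assumes "x > 0" "0 \<le> \<alpha>" "\<alpha> \<le> 2"
  shows "ennreal (pi / 4 * x powr (1 - \<alpha>)) \<le> kernel_row \<alpha> x"
    and "kernel_row \<alpha> x \<le> ennreal (sqrt 2 powr (2 - \<alpha>) * (pi / 4) * x powr (1 - \<alpha>))"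
proof -
  let ?g = "\<lambda>y. x powr -\<alpha> * (1 / (1 + (y / x)\<^sup>2))"
  show "ennreal (pi / 4 * x powr (1 - \<alpha>)) \<le> kernel_row \<alpha> x"
    unfolding kernel_row_def mult.commute[of "pi / 4"] nn_integral_row_comparison[OF assms(1), symmetric]
    using norm_powr_triangle_bounds(1)[of x _ \<alpha>] assms
    by (intro nn_integral_mono) (auto split: split_indicator)
  have "kernel_row \<alpha> x
      \<le> (\<integral>\<^sup>+ y. ennreal (sqrt 2 powr (2 - \<alpha>)) * (ennreal (?g y) * indicator {0..x} y) \<partial>lborel)"
    unfolding kernel_row_def using norm_powr_triangle_bounds(2)[of x _ \<alpha>] assms
    by (intro nn_integral_mono)
       (auto split: split_indicator simp: ennreal_mult[symmetric] add_pos_nonneg)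
  also have "\<dots> = ennreal (sqrt 2 powr (2 - \<alpha>)) * (\<integral>\<^sup>+ y. ennreal (?g y) * indicator {0..x} y \<partial>lborel)"
    by (rule nn_integral_cmult) auto
  also have "\<dots> = ennreal (sqrt 2 powr (2 - \<alpha>)) * ennreal (x powr (1 - \<alpha>) * (pi / 4))"
    by (simp only: nn_integral_row_comparison[OF assms(1)])
  also have "\<dots> = ennreal (sqrt 2 powr (2 - \<alpha>) * (pi / 4) * x powr (1 - \<alpha>))"
    by (simp add: ennreal_mult[symmetric] mult_ac)
  finally show "kernel_row \<alpha> x \<le> ennreal (sqrt 2 powr (2 - \<alpha>) * (pi / 4) * x powr (1 - \<alpha>))" .
qed

lemma kernel_triangle_bounds:
  assumes "0 \<le> h" "0 \<le> \<alpha>" "\<alpha> < 2"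
  shows "ennreal (pi / 4 * (h powr (2 - \<alpha>) / (2 - \<alpha>))) \<le> kernel_triangle \<alpha> h"
    and "kernel_triangle \<alpha> h \<le> ennreal (sqrt 2 powr (2 - \<alpha>) * (pi / 4) * (h powr (2 - \<alpha>) / (2 - \<alpha>)))"
proof -
  have "AE x in lborel. x \<noteq> 0" by (rule AE_lborel_singleton)
  then have pointwise: "AE x in lborel.
      ennreal (pi / 4 * x powr (1 - \<alpha>)) * indicator {0..h} x \<le> kernel_row \<alpha> x * indicator {0..h} x \<and>
      kernel_row \<alpha> x * indicator {0..h} x
        \<le> ennreal (sqrt 2 powr (2 - \<alpha>) * (pi / 4) * x powr (1 - \<alpha>)) * indicator {0..h} x"
    by eventually_elim
       (use kernel_row_bounds[of _ \<alpha>] assms in \<open>auto split: split_indicator\<close>)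
  have "ennreal (pi / 4 * (h powr (2 - \<alpha>) / (2 - \<alpha>)))
      = (\<integral>\<^sup>+ x. ennreal (pi / 4 * x powr (1 - \<alpha>)) * indicator {0..h} x \<partial>lborel)"
    by (rule nn_integral_powr_interval[OF assms(1,3), symmetric]) simp
  also have "\<dots> \<le> kernel_triangle \<alpha> h"
    unfolding kernel_triangle_def using pointwise by (intro nn_integral_mono_AE) auto
  finally show "ennreal (pi / 4 * (h powr (2 - \<alpha>) / (2 - \<alpha>))) \<le> kernel_triangle \<alpha> h" .
  have "kernel_triangle \<alpha> h
      \<le> (\<integral>\<^sup>+ x. ennreal (sqrt 2 powr (2 - \<alpha>) * (pi / 4) * x powr (1 - \<alpha>)) * indicator {0..h} x \<partial>lborel)"
    unfolding kernel_triangle_def using pointwise by (intro nn_integral_mono_AE) auto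
  also have "\<dots> = ennreal (sqrt 2 powr (2 - \<alpha>) * (pi / 4) * (h powr (2 - \<alpha>) / (2 - \<alpha>)))"
    by (rule nn_integral_powr_interval[OF assms(1,3)]) simp
  finally show "kernel_triangle \<alpha> h
      \<le> ennreal (sqrt 2 powr (2 - \<alpha>) * (pi / 4) * (h powr (2 - \<alpha>) / (2 - \<alpha>)))" .
qed

definition lower_triangle :: "real \<Rightarrow> (real \<times> real) set" where
  "lower_triangle h = {p. 0 \<le> snd p \<and> snd p \<le> fst p \<and> fst p \<le> h}"

definition upper_triangle :: "real \<Rightarrow> (real \<times> real) set" where
  "upper_triangle h = {p. 0 \<le> fst p \<and> fst p < snd p \<and> snd p \<le> h}"

lemma triangles_borel [measurable]:
  "lower_triangle h \<in> sets borel" "upper_triangle h \<in> sets borel"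
proof -
  show "lower_triangle h \<in> sets borel" unfolding lower_triangle_def
    by (rule borel_closed) (intro closed_Collect_conj closed_Collect_le continuous_intros)
  have "upper_triangle h = {p. 0 \<le> fst p \<and> snd p \<le> h} \<inter> {p. fst p < snd p}"
    unfolding upper_triangle_def by auto
  then show "upper_triangle h \<in> sets borel"
    by (simp only:) (intro sets.Int borel_closed borel_open closed_Collect_conj closed_Collect_le
        open_Collect_less continuous_intros)
qed

lemma kernel_nn_lower_triangle: "kernel_nn \<alpha> (lower_triangle h) = kernel_triangle \<alpha> h"
proof -
  have "kernel_nn \<alpha> (lower_triangle h)
      = (\<integral>\<^sup>+ x. \<integral>\<^sup>+ y. ennreal (norm (x, y) powr -\<alpha>) * indicator (lower_triangle h) (x, y) \<partial>lborel \<partial>lborel)"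
    unfolding kernel_nn_def by (rule nn_integral_lborel_pair_fst) auto
  also have "\<dots> = (\<integral>\<^sup>+ x. kernel_row \<alpha> x * indicator {0..h} x \<partial>lborel)"
  proof (intro nn_integral_cong)
    fix x :: real
    have "(\<integral>\<^sup>+ y. ennreal (norm (x, y) powr -\<alpha>) * indicator (lower_triangle h) (x, y) \<partial>lborel)
        = (\<integral>\<^sup>+ y. ennreal (norm (x, y) powr -\<alpha>) * indicator {0..x} y * indicator {0..h} x \<partial>lborel)"
      by (intro nn_integral_cong) (auto simp: lower_triangle_def split: split_indicator)
    also have "\<dots> = kernel_row \<alpha> x * indicator {0..h} x"
      unfolding kernel_row_def by (rule nn_integral_multc) measurable
    finally show "(\<integral>\<^sup>+ y. ennreal (norm (x, y) powr -\<alpha>) * indicator (lower_triangle h) (x, y) \<partial>lborel)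
        = kernel_row \<alpha> x * indicator {0..h} x" .
  qed
  finally show ?thesis unfolding kernel_triangle_def .
qed

lemma kernel_nn_upper_triangle: "kernel_nn \<alpha> (upper_triangle h) = kernel_triangle \<alpha> h"
proof -
  have "kernel_nn \<alpha> (upper_triangle h)
      = (\<integral>\<^sup>+ y. \<integral>\<^sup>+ x. ennreal (norm (x, y) powr -\<alpha>) * indicator (upper_triangle h) (x, y) \<partial>lborel \<partial>lborel)"
    unfolding kernel_nn_def by (rule nn_integral_lborel_pair_snd) auto
  also have "\<dots> = (\<integral>\<^sup>+ y. kernel_row \<alpha> y * indicator {0..h} y \<partial>lborel)"
  proof (intro nn_integral_cong)
    fix y :: real
    have "(\<integral>\<^sup>+ x. ennreal (norm (x, y) powr -\<alpha>) * indicator (upper_triangle h) (x, y) \<partial>lborel)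
        = (\<integral>\<^sup>+ x. ennreal (norm (y, x) powr -\<alpha>) * indicator {0..y} x * indicator {0..h} y \<partial>lborel)"
      using AE_lborel_singleton[of y]
      by (intro nn_integral_cong_AE, eventually_elim)
         (auto simp: upper_triangle_def norm_Pair add.commute split: split_indicator)
    also have "\<dots> = kernel_row \<alpha> y * indicator {0..h} y"
      unfolding kernel_row_def by (rule nn_integral_multc) measurable
    finally show "(\<integral>\<^sup>+ x. ennreal (norm (x, y) powr -\<alpha>) * indicator (upper_triangle h) (x, y) \<partial>lborel)
        = kernel_row \<alpha> y * indicator {0..h} y" .
  qed
  finally show ?thesis unfolding kernel_triangle_def .
qed

lemma kernel_nn_square:
  assumes "0 \<le> h"
  shows "kernel_nn \<alpha> ({0..h} \<times> {0..h}) = 2 * kernel_triangle \<alpha> h"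
proof -
  have "{0..h} \<times> {0..h} = lower_triangle h \<union> upper_triangle h"
    using assms by (auto simp: lower_triangle_def upper_triangle_def)
  moreover have "lower_triangle h \<inter> upper_triangle h = {}"
    by (auto simp: lower_triangle_def upper_triangle_def)
  ultimately show ?thesis
    by (simp add: kernel_nn_Un kernel_nn_lower_triangle kernel_nn_upper_triangle mult_2)
qed

lemma vertical_line_null_sets: "{a::real} \<times> (UNIV::real set) \<in> null_sets lborel"
proof -
  have "{a} \<times> (UNIV::real set) \<in> null_sets (lborel \<Otimes>\<^sub>M lborel)"
    by (intro lborel.times_in_null_sets1) auto
  then show ?thesis by (simp add: lborel_prod)
qed

lemma horizontal_line_null_sets: "(UNIV::real set) \<times> {a::real} \<in> null_sets lborel"
proof -
  have "(UNIV::real set) \<times> {a} \<in> null_sets (lborel \<Otimes>\<^sub>M lborel)"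
    by (intro lborel.times_in_null_sets2) auto
  then show ?thesis by (simp add: lborel_prod)
qed

lemma kernel_nn_square_ae:
  assumes "0 \<le> h" "{0<..<h} \<times> {0<..<h} \<subseteq> A" "A \<subseteq> {0..h} \<times> {0..h}"
  shows "kernel_nn \<alpha> A = 2 * kernel_triangle \<alpha> h"
proof -
  let ?boundary = "{0} \<times> UNIV \<union> {h} \<times> UNIV \<union> UNIV \<times> {0} \<union> UNIV \<times> {h} :: (real \<times> real) set"
  have null: "?boundary \<in> null_sets lborel"
    by (intro null_sets.Un vertical_line_null_sets horizontal_line_null_sets)
  have "{0..h} \<times> {0..h} - A \<subseteq> ?boundary"
    using assms(2) by (fastforce simp: subset_eq less_le)
  then have "AE \<xi> in lborel. \<xi> \<in> {0..h} \<times> {0..h} \<longrightarrow> \<xi> \<in> A"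
    by (intro AE_I'[OF null]) auto
  then have "kernel_nn \<alpha> ({0..h} \<times> {0..h}) \<le> kernel_nn \<alpha> A"
    unfolding kernel_nn_def
    by (intro nn_integral_mono_AE) (auto elim!: eventually_mono split: split_indicator)
  moreover have "kernel_nn \<alpha> A \<le> kernel_nn \<alpha> ({0..h} \<times> {0..h})"
    by (rule kernel_nn_mono[OF assms(3)])
  ultimately show ?thesis
    using kernel_nn_square[OF assms(1)] by (metis antisym)
qed

lemma Kint_square_bounds:
  assumes "0 < h" "A \<in> sets lborel" "0 \<le> \<alpha>" "\<alpha> < 2"
    and "{0<..<h} \<times> {0<..<h} \<subseteq> A" "A \<subseteq> {0..h} \<times> {0..h}"
  shows "pi / 2 * (h powr (2 - \<alpha>) / (2 - \<alpha>)) \<le> Kint \<alpha> A"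
    and "Kint \<alpha> A \<le> sqrt 2 powr (2 - \<alpha>) * (pi / 2) * (h powr (2 - \<alpha>) / (2 - \<alpha>))"
proof -
  define H where "H = h powr (2 - \<alpha>) / (2 - \<alpha>)"
  define S where "S = sqrt 2 powr (2 - \<alpha>)"
  have "0 \<le> H" "0 \<le> S" using assms by (auto simp: H_def S_def)
  then have "0 \<le> S * (pi / 4) * H" "0 \<le> pi / 4 * H" by (simp_all add: mult_nonneg_nonneg)
  have double: "ennreal (2 * y) = 2 * ennreal y" if "0 \<le> y" for y :: real
    using that by (simp add: ennreal_mult)
  have kernel: "kernel_nn \<alpha> A = 2 * kernel_triangle \<alpha> h"
    using assms by (intro kernel_nn_square_ae) auto
  have upper: "kernel_nn \<alpha> A \<le> ennreal (2 * (S * (pi / 4) * H))"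
    unfolding kernel double[OF \<open>0 \<le> S * (pi / 4) * H\<close>]
    using kernel_triangle_bounds(2)[of h \<alpha>] assms \<open>0 \<le> S\<close> unfolding H_def S_def
    by (intro mult_left_mono) auto
  have lower: "ennreal (2 * (pi / 4 * H)) \<le> kernel_nn \<alpha> A"
    unfolding kernel double[OF \<open>0 \<le> pi / 4 * H\<close>]
    using kernel_triangle_bounds(1)[of h \<alpha>] assms unfolding H_def
    by (intro mult_left_mono) auto
  have "enn2real (ennreal (2 * (pi / 4 * H))) \<le> enn2real (kernel_nn \<alpha> A)"
    using lower order.strict_trans1[OF upper ennreal_less_top] by (rule enn2real_mono)
  then show "pi / 2 * H \<le> Kint \<alpha> A"
    using Kint_eq_enn2real[OF assms(2)] \<open>0 \<le> H\<close> by (simp add: mult_ac)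
  have "Kint \<alpha> A \<le> 2 * (S * (pi / 4) * H)"
    using Kint_le_if_kernel_nn_le[OF assms(2) upper] \<open>0 \<le> H\<close> \<open>0 \<le> S\<close> by simp
  then show "Kint \<alpha> A \<le> S * (pi / 2) * H" by (simp add: mult_ac)
qed

lemma tendsto_c2_Kint_square:
  assumes "0 < h" "A \<in> sets lborel"
    and "{0<..<h} \<times> {0<..<h} \<subseteq> A" "A \<subseteq> {0..h} \<times> {0..h}"
  shows "((\<lambda>\<alpha>. c2 \<alpha> * Kint \<alpha> A) \<longlongrightarrow> 1) (at_left 2)"
proof (rule tendsto_sandwich)
  let ?l = "\<lambda>\<alpha>. c2_regular \<alpha> * (pi / 2) * h powr (2 - \<alpha>)"
  let ?u = "\<lambda>\<alpha>. sqrt 2 powr (2 - \<alpha>) * ?l \<alpha>"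
  have bounds: "?l \<alpha> \<le> c2 \<alpha> * Kint \<alpha> A \<and> c2 \<alpha> * Kint \<alpha> A \<le> ?u \<alpha>" if "1 < \<alpha>" "\<alpha> < 2" for \<alpha>
  proof -
    have "0 < c2 \<alpha>" using that by (intro c2_pos) auto
    then have "c2 \<alpha> * (pi / 2 * (h powr (2 - \<alpha>) / (2 - \<alpha>))) \<le> c2 \<alpha> * Kint \<alpha> A"
      and "c2 \<alpha> * Kint \<alpha> A \<le> c2 \<alpha> * (sqrt 2 powr (2 - \<alpha>) * (pi / 2) * (h powr (2 - \<alpha>) / (2 - \<alpha>)))"
      using Kint_square_bounds[OF assms(1,2) _ _ assms(3,4), of \<alpha>] that
      by (intro mult_left_mono; simp)+
    moreover have "c2 \<alpha> * (pi / 2 * (h powr (2 - \<alpha>) / (2 - \<alpha>))) = ?l \<alpha>"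
      and "c2 \<alpha> * (sqrt 2 powr (2 - \<alpha>) * (pi / 2) * (h powr (2 - \<alpha>) / (2 - \<alpha>))) = ?u \<alpha>"
      using that by (simp_all add: c2_eq_regular field_simps)
    ultimately show ?thesis by argo
  qed
  show "eventually (\<lambda>\<alpha>. ?l \<alpha> \<le> c2 \<alpha> * Kint \<alpha> A) (at_left 2)"
    and "eventually (\<lambda>\<alpha>. c2 \<alpha> * Kint \<alpha> A \<le> ?u \<alpha>) (at_left 2)"
    using eventually_at_left_2 by (auto elim!: eventually_mono dest: bounds)
  have "(?l \<longlongrightarrow> 2 / pi * (pi / 2) * h powr (2 - 2)) (at_left 2)"
    using assms(1) by (intro tendsto_intros tendsto_c2_regular) auto
  then show "(?l \<longlongrightarrow> 1) (at_left 2)" using assms(1) by simp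
  have "(?u \<longlongrightarrow> sqrt 2 powr (2 - 2) * (2 / pi * (pi / 2) * h powr (2 - 2))) (at_left 2)"
    using assms(1) by (intro tendsto_intros tendsto_c2_regular) auto
  then show "(?u \<longlongrightarrow> 1) (at_left 2)" using assms(1) by simp
qed

section \<open>Sets away from the origin and the tail\<close>

lemma Times_atLeastAtMost_borel: "{a..b::real} \<times> {c..d::real} \<in> sets borel"
  by (intro borel_closed closed_Times) auto

lemma emeasure_lborel_square:
  assumes "0 \<le> L"
  shows "emeasure lborel ({0..L} \<times> {0..L::real}) = ennreal (L * L)"
proof -
  have "emeasure (lborel \<Otimes>\<^sub>M lborel) ({0..L} \<times> {0..L::real})
      = emeasure lborel {0..L} * emeasure lborel {0..L::real}"
    by (intro lborel.emeasure_pair_measure_Times) auto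
  then show ?thesis using assms by (simp add: lborel_prod ennreal_mult)
qed

lemma kernel_nn_far_le:
  assumes "0 < h" "0 \<le> L" "A \<subseteq> {0..L} \<times> {0..L}" "\<And>\<xi>. \<xi> \<in> A \<Longrightarrow> h \<le> norm \<xi>" "0 \<le> \<alpha>"
  shows "kernel_nn \<alpha> A \<le> ennreal (h powr -\<alpha> * (L * L))"
proof -
  have "kernel_nn \<alpha> A \<le> (\<integral>\<^sup>+ \<xi>. ennreal (h powr -\<alpha>) * indicator ({0..L} \<times> {0..L}) \<xi> \<partial>lborel)"
    unfolding kernel_nn_def
  proof (intro nn_integral_mono)
    fix \<xi> :: "real \<times> real"
    have "norm \<xi> powr -\<alpha> \<le> h powr -\<alpha>" if "\<xi> \<in> A"
      using assms that by (intro powr_mono2') auto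
    then show "ennreal (norm \<xi> powr -\<alpha>) * indicator A \<xi>
        \<le> ennreal (h powr -\<alpha>) * indicator ({0..L} \<times> {0..L}) \<xi>"
      using assms(3) by (auto split: split_indicator)
  qed
  also have "\<dots> = ennreal (h powr -\<alpha>) * emeasure lborel ({0..L} \<times> {0..L})"
    by (rule nn_integral_cmult_indicator) (simp add: Times_atLeastAtMost_borel)
  also have "\<dots> = ennreal (h powr -\<alpha> * (L * L))"
    using assms by (simp add: emeasure_lborel_square ennreal_mult)
  finally show ?thesis .
qed

lemma tendsto_c2_Kint_far:
  assumes "0 < h" "0 \<le> L" "A \<in> sets lborel" "A \<subseteq> {0..L} \<times> {0..L}" "\<And>\<xi>. \<xi> \<in> A \<Longrightarrow> h \<le> norm \<xi>"
  shows "((\<lambda>\<alpha>. c2 \<alpha> * Kint \<alpha> A) \<longlongrightarrow> 0) (at_left 2)"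
proof (rule tendsto_c2_mult_zero)
  show "eventually (\<lambda>\<alpha>. 0 \<le> Kint \<alpha> A \<and> Kint \<alpha> A \<le> h powr -\<alpha> * (L * L)) (at_left 2)"
    using eventually_at_left_2
    by eventually_elim (use assms in \<open>auto intro!: Kint_nonneg Kint_le_if_kernel_nn_le kernel_nn_far_le\<close>)
  show "((\<lambda>\<alpha>. h powr -\<alpha> * (L * L)) \<longlongrightarrow> h powr -2 * (L * L)) (at_left 2)"
    using assms(1) by (intro tendsto_intros) auto
qed

lemma tendsto_c2_Kint_corner:
  assumes "0 < h" "h \<le> L" "T \<in> sets lborel" "T \<subseteq> {0..L} \<times> {0..L}"
    and "{0<..<h} \<times> {0<..<h} \<subseteq> T"
  shows "((\<lambda>\<alpha>. c2 \<alpha> * Kint \<alpha> T) \<longlongrightarrow> 1) (at_left 2)"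
proof -
  let ?I = "{0..h} \<times> {0..h::real}"
  have I: "?I \<in> sets lborel" using Times_atLeastAtMost_borel by simp
  have near: "T \<inter> ?I \<in> sets lborel" and far: "T - ?I \<in> sets lborel" using assms(3) I by auto
  have far_norm: "h \<le> norm \<xi>" if "\<xi> \<in> T - ?I" for \<xi>
  proof -
    obtain x y where xy: "\<xi> = (x, y)" by (cases \<xi>)
    with that assms(4) have "0 \<le> x" "0 \<le> y" "h < x \<or> h < y" by auto
    moreover have "x \<le> norm \<xi>" "y \<le> norm \<xi>" unfolding xy norm_Pair
      by (auto intro!: real_le_rsqrt)
    ultimately show ?thesis by auto
  qed
  have "Kint \<alpha> T = Kint \<alpha> (T \<inter> ?I) + Kint \<alpha> (T - ?I)" if "1 < \<alpha>" "\<alpha> < 2" for \<alpha>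
  proof (rule Kint_split[OF assms(3) I])
    have "kernel_nn \<alpha> (T \<inter> ?I) \<le> 2 * kernel_triangle \<alpha> h"
      using kernel_nn_mono[of "T \<inter> ?I" ?I] kernel_nn_square assms(1) by fastforce
    also have "\<dots> < top"
      using kernel_triangle_bounds(2)[of h \<alpha>] assms(1) that
      by (simp add: ennreal_mult_less_top le_less_trans)
    finally show "kernel_nn \<alpha> (T \<inter> ?I) < top" .
    have "kernel_nn \<alpha> (T - ?I) \<le> ennreal (h powr -\<alpha> * (L * L))"
      using assms that by (intro kernel_nn_far_le far_norm) auto
    then show "kernel_nn \<alpha> (T - ?I) < top"
      using order.strict_trans1 ennreal_less_top by blast
  qed
  then have "eventually (\<lambda>\<alpha>. c2 \<alpha> * Kint \<alpha> (T \<inter> ?I) + c2 \<alpha> * Kint \<alpha> (T - ?I) = c2 \<alpha> * Kint \<alpha> T) (at_left 2)"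
    using eventually_at_left_2 by (auto elim!: eventually_mono simp: distrib_left)
  moreover have "((\<lambda>\<alpha>. c2 \<alpha> * Kint \<alpha> (T \<inter> ?I) + c2 \<alpha> * Kint \<alpha> (T - ?I)) \<longlongrightarrow> 1 + 0) (at_left 2)"
  proof (intro tendsto_add)
    show "((\<lambda>\<alpha>. c2 \<alpha> * Kint \<alpha> (T \<inter> ?I)) \<longlongrightarrow> 1) (at_left 2)"
      using assms by (intro tendsto_c2_Kint_square near) auto
    show "((\<lambda>\<alpha>. c2 \<alpha> * Kint \<alpha> (T - ?I)) \<longlongrightarrow> 0) (at_left 2)"
      using assms by (intro tendsto_c2_Kint_far[OF assms(1) _ far _ far_norm, where L = L]) auto
  qed
  ultimately show ?thesis by (simp add: tendsto_cong)
qed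

text \<open>On \<open>D2\<close> both \<open>1 + x\<close> and \<open>1 + y\<close> are at most \<open>(1 + s) |\<xi>|\<close>, so the kernel is dominated,
  uniformly in \<open>\<alpha> \<in> [1,2]\<close>, by an integrable product.\<close>

lemma norm_powr_le_tail_product:
  fixes x y L \<alpha> :: real
  assumes "0 < x" "0 < y" "L \<le> x \<or> L \<le> y" "0 < L" "1 \<le> \<alpha>" "\<alpha> \<le> 2"
  defines "s \<equiv> max 1 (1 / L)"
  shows "norm (x, y) powr -(2 + \<alpha>) \<le> (1 + s) powr 4 * ((1 + x) powr (-3/2) * (1 + y) powr (-3/2))"
proof -
  define r where "r = norm (x, y)"
  have rx: "x \<le> r" "y \<le> r" unfolding r_def norm_Pair by (auto intro!: real_le_rsqrt)
  have s1: "1 \<le> s" "1 / L \<le> s" by (auto simp: s_def)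
  have "1 = (1 / L) * L" using assms by simp
  also have "\<dots> \<le> s * r" using s1 rx assms by (intro mult_mono) auto
  finally have sr: "1 \<le> s * r" .
  define R where "R = (1 + s) * r"
  have Rx: "1 + x \<le> R" "1 + y \<le> R" unfolding R_def using sr rx by (auto simp: algebra_simps)
  have R1: "1 \<le> R" using Rx assms by simp
  have r0: "0 < r" using rx assms by simp
  have "R powr -(2 + \<alpha>) = (1 + s) powr -(2 + \<alpha>) * r powr -(2 + \<alpha>)"
    unfolding R_def using r0 s1 by (simp add: powr_mult)
  moreover have "(1 + s) powr (2 + \<alpha>) * (1 + s) powr -(2 + \<alpha>) = 1"
    using s1 by (simp add: powr_add[symmetric])
  ultimately have "r powr -(2 + \<alpha>) = (1 + s) powr (2 + \<alpha>) * R powr -(2 + \<alpha>)"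
    by (metis mult.assoc mult_1)
  also have "\<dots> \<le> (1 + s) powr 4 * R powr -3"
  proof (intro mult_mono)
    show "(1 + s) powr (2 + \<alpha>) \<le> (1 + s) powr 4" using s1 assms by (intro powr_mono) auto
    show "R powr -(2 + \<alpha>) \<le> R powr -3" using R1 assms by (intro powr_mono) auto
  qed auto
  also have "R powr -3 = R powr (-3/2) * R powr (-3/2)" by (simp add: powr_add[symmetric])
  also have "\<dots> \<le> (1 + x) powr (-3/2) * (1 + y) powr (-3/2)"
    using Rx assms by (intro mult_mono powr_mono2') auto
  finally show ?thesis unfolding r_def using s1 by (simp add: mult_left_mono)
qed

lemma nn_integral_one_plus_powr_le:
  "(\<integral>\<^sup>+ t. ennreal ((1 + t) powr (-3/2)) * indicator {0..} t \<partial>lborel) \<le> 3"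
proof -
  have "(\<integral>\<^sup>+ t. ennreal ((1 + t) powr (-3/2)) * indicator {0..} t \<partial>lborel)
     \<le> (\<integral>\<^sup>+ t. indicator {0..1} t + ennreal (t powr (-3/2)) * indicator {1..} t \<partial>lborel)"
  proof (intro nn_integral_mono)
    fix t :: real
    consider "t < 0" | "0 \<le> t" "t \<le> 1" | "1 < t" by linarith
    then show "ennreal ((1 + t) powr (-3/2)) * indicator {0..} t
        \<le> indicator {0..1} t + ennreal (t powr (-3/2)) * indicator {1..} t"
    proof cases
      case 2
      have "(1 + t) powr (-3/2) \<le> (1 + t) powr 0" using 2 by (intro powr_mono) auto
      then have "ennreal ((1 + t) powr (-3/2)) * indicator {0..} t \<le> 1"
        using 2 by (simp add: ennreal_leI)
      also have "(1::ennreal) \<le> indicator {0..1} t + ennreal (t powr (-3/2)) * indicator {1..} t"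
        using 2 by (simp add: indicator_def)
      finally show ?thesis .
    next
      case 3
      have "(1 + t) powr (-3/2) \<le> t powr (-3/2)" using 3 by (intro powr_mono2') auto
      then show ?thesis using 3 by (simp add: indicator_def)
    qed simp
  qed
  also have "\<dots> = (\<integral>\<^sup>+ t. indicator {0..1::real} t \<partial>lborel)
      + (\<integral>\<^sup>+ t. ennreal (t powr (-3/2)) * indicator {1..} t \<partial>lborel)"
    by (rule nn_integral_add) auto
  also have "(\<integral>\<^sup>+ t. ennreal (t powr (-3/2)) * indicator {1..} t \<partial>lborel) = ennreal 2"
  proof -
    have "((\<lambda>t::real. t powr (-3/2)) has_integral -(1 powr (-3/2 + 1)) / (-3/2 + 1)) {1..}"
      by (intro has_integral_powr_to_inf) auto
    then have "((\<lambda>t::real. t powr (-3/2)) has_integral 2) {1..}" by simp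
    from nn_integral_has_integral_lebesgue'[OF _ this] show ?thesis by simp
  qed
  finally show ?thesis by simp
qed

lemma D2_borel [measurable]: "D2 L \<in> sets borel"
  unfolding D2_def D1_def
  by (intro sets.Diff borel_closed borel_open closed_Times open_Times) auto

lemma kernel_nn_D2_le:
  assumes "0 < L" "1 \<le> \<alpha>" "\<alpha> \<le> 2"
  shows "kernel_nn (2 + \<alpha>) (D2 L) \<le> ennreal ((1 + max 1 (1 / L)) powr 4 * 9)"
proof -
  define C where "C = (1 + max 1 (1 / L)) powr 4"
  define k where "k = (\<lambda>t::real. ennreal ((1 + t) powr (-3/2)) * indicator {0..} t)"
  have [measurable]: "k \<in> borel_measurable borel" unfolding k_def by measurable
  have measurable_product_k: "(\<lambda>\<xi>. ennreal C * k (fst \<xi>) * k (snd \<xi>)) \<in> borel_measurable borel"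
    unfolding borel_prod[symmetric] by measurable
  have bound: "ennreal (norm \<xi> powr -(2 + \<alpha>)) * indicator (D2 L) \<xi> \<le> ennreal C * k (fst \<xi>) * k (snd \<xi>)"
    if "fst \<xi> \<noteq> 0" "snd \<xi> \<noteq> 0" for \<xi>
  proof (cases "\<xi> \<in> D2 L")
    case True
    obtain x y where xy: "\<xi> = (x, y)" by (cases \<xi>)
    with True that have "0 < x" "0 < y" "L \<le> x \<or> L \<le> y"
      unfolding D2_def D1_def by auto
    from norm_powr_le_tail_product[OF this assms]
    have "ennreal (norm \<xi> powr -(2 + \<alpha>)) \<le> ennreal (C * ((1 + x) powr (-3/2) * (1 + y) powr (-3/2)))"
      unfolding C_def xy by (rule ennreal_leI)
    also have "\<dots> = ennreal C * k (fst \<xi>) * k (snd \<xi>)"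
      unfolding k_def xy using \<open>0 < x\<close> \<open>0 < y\<close> by (simp add: ennreal_mult C_def mult.assoc)
    finally show ?thesis using True by simp
  qed simp
  have "AE \<xi> in lborel. fst \<xi> \<noteq> 0 \<and> snd (\<xi> :: real \<times> real) \<noteq> 0"
    by (rule AE_I'[OF null_sets.Un[OF vertical_line_null_sets horizontal_line_null_sets]])
       (auto simp: mem_Times_iff)
  then have "kernel_nn (2 + \<alpha>) (D2 L) \<le> (\<integral>\<^sup>+ \<xi>. ennreal C * k (fst \<xi>) * k (snd \<xi>) \<partial>lborel)"
    unfolding kernel_nn_def by (rule nn_integral_mono_AE[OF eventually_mono]) (blast intro: bound)
  also have "\<dots> = (\<integral>\<^sup>+ x. \<integral>\<^sup>+ y. ennreal C * k x * k y \<partial>lborel \<partial>lborel)"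
    unfolding nn_integral_lborel_pair_fst[OF measurable_product_k] by simp
  also have "\<dots> = ennreal C * (integral\<^sup>N lborel k * integral\<^sup>N lborel k)"
    by (simp add: nn_integral_cmult nn_integral_multc mult.assoc)
  also have "\<dots> \<le> ennreal C * (3 * 3)"
    using nn_integral_one_plus_powr_le unfolding k_def[symmetric]
    by (intro mult_left_mono mult_mono) auto
  also have "\<dots> = ennreal (C * 9)"
    by (simp add: ennreal_mult C_def)
  finally show ?thesis unfolding C_def .
qed

lemma tendsto_c2_Kint_D2:
  assumes "0 < L"
  shows "((\<lambda>\<alpha>. c2 \<alpha> * (LINT \<xi>:D2 L|lborel. norm \<xi> powr (-(2 + \<alpha>)))) \<longlongrightarrow> 0) (at_left 2)"
  unfolding Kint_def[symmetric]
proof (rule tendsto_c2_mult_zero)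
  show "eventually (\<lambda>\<alpha>. 0 \<le> Kint (2 + \<alpha>) (D2 L) \<and>
      Kint (2 + \<alpha>) (D2 L) \<le> (1 + max 1 (1 / L)) powr 4 * 9) (at_left 2)"
    using eventually_at_left_2
    by eventually_elim (use assms kernel_nn_D2_le in \<open>auto intro!: Kint_nonneg Kint_le_if_kernel_nn_le\<close>)
qed (rule tendsto_const)

section \<open>Limits of the coefficients\<close>

lemma cell_0_0: "cell h 0 0 = {0..h} \<times> {0..h}"
  by (simp add: cell_def)

lemma cell_borel: "cell h i j \<in> sets borel"
  unfolding cell_def by (auto intro!: Times_atLeastAtMost_borel)

lemma D1_borel: "D1 L \<in> sets borel"
  unfolding D1_def by (intro borel_open open_Times) auto

lemma Tcell_borel: "Tcell L h m n \<in> sets lborel"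
  unfolding Tcell_def using cell_borel D1_borel by auto

lemma Tcell_subset_square: "Tcell L h m n \<subseteq> {0..L} \<times> {0..L}"
  unfolding Tcell_def D1_def by auto

lemma norm_ge_of_mem_cell:
  assumes "0 < h" "1 \<le> i \<or> 1 \<le> j" "\<xi> \<in> cell h i j"
  shows "h \<le> norm \<xi>"
proof -
  obtain x y where xy: "\<xi> = (x, y)" by (cases \<xi>)
  have ij: "0 \<le> i" "0 \<le> j" using assms(3) unfolding cell_def by (auto split: if_splits)
  then have "of_int i * h \<le> x" "of_int j * h \<le> y" using assms(3) unfolding cell_def xy by auto
  moreover have "0 \<le> of_int i * h" "0 \<le> of_int j * h" using ij assms(1) by auto
  moreover have "h \<le> of_int i * h \<or> h \<le> of_int j * h" using assms(1,2) by auto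
  moreover have "\<bar>x\<bar> \<le> norm \<xi>" "\<bar>y\<bar> \<le> norm \<xi>" unfolding xy norm_Pair
    by (auto intro!: real_le_rsqrt)
  ultimately show ?thesis by auto
qed

lemma norm_ge_of_mem_Tcell:
  assumes "0 < h" "2 \<le> m \<or> 2 \<le> n" "\<xi> \<in> Tcell L h m n"
  shows "h \<le> norm \<xi>"
  using assms(2,3) unfolding Tcell_def by (auto elim!: norm_ge_of_mem_cell[OF assms(1), rotated])

lemma open_cell_subset_Tcell:
  assumes "0 < h" "h \<le> L" "0 < m + n" "m \<le> 1" "n \<le> 1"
  shows "{0<..<h} \<times> {0<..<h} \<subseteq> Tcell L h m n"
proof -
  have "{0<..<h} \<times> {0<..<h} \<subseteq> cell h 0 0 \<inter> D1 L"
    using assms unfolding cell_0_0 D1_def by auto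
  moreover have "(m, n) \<in> {(1, 0), (0, 1), (1, 1)}" using assms(3-5) by auto
  ultimately show ?thesis unfolding Tcell_def by auto
qed

lemma tendsto_c2_Kint_Tcell:
  assumes "0 < h" "h \<le> L" "0 < m + n"
  shows "((\<lambda>\<alpha>. c2 \<alpha> * Kint \<alpha> (Tcell L h m n)) \<longlongrightarrow> (if m \<le> 1 \<and> n \<le> 1 then 1 else 0)) (at_left 2)"
proof (cases "m \<le> 1 \<and> n \<le> 1")
  case True
  then show ?thesis
    unfolding if_P[OF True]
    using tendsto_c2_Kint_corner[OF assms(1,2) Tcell_borel Tcell_subset_square
        open_cell_subset_Tcell[OF assms]] by simp
next
  case False
  then have "2 \<le> m \<or> 2 \<le> n" by auto
  then have "((\<lambda>\<alpha>. c2 \<alpha> * Kint \<alpha> (Tcell L h m n)) \<longlongrightarrow> 0) (at_left 2)"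
    using assms(1,2)
    by (intro tendsto_c2_Kint_far[OF assms(1) _ Tcell_borel Tcell_subset_square] norm_ge_of_mem_Tcell) auto
  then show ?thesis unfolding if_not_P[OF False] .
qed

definition five_point_weight :: "real \<Rightarrow> nat \<Rightarrow> nat \<Rightarrow> real" where
  "five_point_weight h m n = (if m = 0 \<and> n = 0 then - 4 / h\<^sup>2 else if m + n = 1 then 1 / h\<^sup>2 else 0)"

lemma tendsto_c2_acoef:
  assumes "0 < L" "0 < N" "0 < m + n"
  shows "((\<lambda>\<alpha>. c2 \<alpha> * acoef \<alpha> L N m n) \<longlongrightarrow> five_point_weight (L / real N) m n) (at_left 2)"
proof -
  define h where "h = L / real N"
  have "0 < h" "h \<le> L" using assms by (auto simp: h_def field_simps)
  define w where "w = 2 ^ sigma_zeros m n / (4 * ((real m * h)\<^sup>2 + (real n * h)\<^sup>2))"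
  have "c2 \<alpha> * acoef \<alpha> L N m n
      = w * (c2 \<alpha> * Kint \<alpha> (Tcell L h m n) + cbar m n * (c2 \<alpha> * Kint \<alpha> (cell h 0 0)))" for \<alpha>
    unfolding acoef_def Let_def h_def[symmetric] w_def by (simp add: algebra_simps)
  moreover have "((\<lambda>\<alpha>. w * (c2 \<alpha> * Kint \<alpha> (Tcell L h m n) + cbar m n * (c2 \<alpha> * Kint \<alpha> (cell h 0 0))))
      \<longlongrightarrow> w * ((if m \<le> 1 \<and> n \<le> 1 then 1 else 0) + cbar m n * 1)) (at_left 2)"
    using \<open>0 < h\<close> \<open>h \<le> L\<close> assms(3)
    by (intro tendsto_intros tendsto_c2_Kint_Tcell tendsto_c2_Kint_square)
       (auto simp: cell_0_0 Times_atLeastAtMost_borel)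
  moreover have "w * ((if m \<le> 1 \<and> n \<le> 1 then 1 else 0) + cbar m n * 1) = five_point_weight h m n"
  proof (cases "m + n = 1")
    case True
    then have "(m, n) = (1, 0) \<or> (m, n) = (0, 1)" by auto
    then show ?thesis unfolding w_def five_point_weight_def using \<open>0 < h\<close>
      by (auto simp: sigma_zeros_def cbar_def field_simps power2_eq_square)
  next
    case False
    then show ?thesis using assms(3) by (auto simp: five_point_weight_def cbar_def)
  qed
  ultimately show ?thesis by (simp add: h_def)
qed

lemma tendsto_c2_a00:
  assumes "0 < L" "0 < N"
  shows "((\<lambda>\<alpha>. c2 \<alpha> * a00 \<alpha> L N) \<longlongrightarrow> five_point_weight (L / real N) 0 0) (at_left 2)"
proof -
  define h where "h = L / real N"
  let ?w = "five_point_weight h"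
  have "c2 \<alpha> * a00 \<alpha> L N = - 2 * (\<Sum>m=1..N. c2 \<alpha> * acoef \<alpha> L N m 0 + c2 \<alpha> * acoef \<alpha> L N 0 m)
     - 4 * (\<Sum>m=1..N. \<Sum>n=1..N. c2 \<alpha> * acoef \<alpha> L N m n)
     - 4 * (c2 \<alpha> * (LINT \<xi>:D2 L|lborel. norm \<xi> powr (-(2 + \<alpha>))))" for \<alpha>
    unfolding a00_def by (simp add: algebra_simps sum_distrib_left)
  moreover have "((\<lambda>\<alpha>. - 2 * (\<Sum>m=1..N. c2 \<alpha> * acoef \<alpha> L N m 0 + c2 \<alpha> * acoef \<alpha> L N 0 m)
     - 4 * (\<Sum>m=1..N. \<Sum>n=1..N. c2 \<alpha> * acoef \<alpha> L N m n)
     - 4 * (c2 \<alpha> * (LINT \<xi>:D2 L|lborel. norm \<xi> powr (-(2 + \<alpha>)))))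
     \<longlongrightarrow> - 2 * (\<Sum>m=1..N. ?w m 0 + ?w 0 m) - 4 * (\<Sum>m=1..N. \<Sum>n=1..N. ?w m n) - 4 * 0) (at_left 2)"
    unfolding h_def by (intro tendsto_intros tendsto_c2_Kint_D2 tendsto_c2_acoef assms) auto
  moreover have "(\<Sum>m=1..N. ?w m 0 + ?w 0 m) = (\<Sum>m\<in>{1..N}. if m = 1 then 2 / h\<^sup>2 else 0)"
    by (intro sum.cong) (auto simp: five_point_weight_def)
  moreover have "(\<Sum>m=1..N. \<Sum>n=1..N. ?w m n) = 0"
    by (intro sum.neutral ballI) (auto simp: five_point_weight_def)
  ultimately show ?thesis
    using assms(2) by (simp add: h_def five_point_weight_def)
qed

lemma tendsto_c2_acoeff:
  assumes "0 < L" "0 < N"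
  shows "((\<lambda>\<alpha>. c2 \<alpha> * acoeff \<alpha> L N m n) \<longlongrightarrow> five_point_weight (L / real N) m n) (at_left 2)"
  using tendsto_c2_a00[OF assms] tendsto_c2_acoef[OF assms, of m n]
  by (cases "m = 0 \<and> n = 0") (auto simp: acoeff_def)

lemma taxicab_unit_sphere:
  fixes p q i j :: int
  assumes "nat \<bar>p - i\<bar> + nat \<bar>q - j\<bar> = 1"
  shows "(p, q) \<in> {(i + 1, j), (i - 1, j), (i, j + 1), (i, j - 1)}"
  using assms by (cases "p = i"; cases "q = j") (auto split: abs_split)

lemma sum_five_point_weight:
  fixes u :: "int \<Rightarrow> int \<Rightarrow> real"
  assumes "finite G" "\<forall>p q. (p, q) \<notin> G \<longrightarrow> u p q = 0"
  shows "(\<Sum>(p, q)\<in>G. - five_point_weight h (nat \<bar>p - i\<bar>) (nat \<bar>q - j\<bar>) * u p q)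
       = (4 * u i j - u (i + 1) j - u (i - 1) j - u i (j + 1) - u i (j - 1)) / h\<^sup>2"
proof -
  define F where "F = (\<lambda>(p, q). - five_point_weight h (nat \<bar>p - i\<bar>) (nat \<bar>q - j\<bar>) * u p q)"
  define S where "S = {(i, j), (i + 1, j), (i - 1, j), (i, j + 1), (i, j - 1)}"
  have "sum F G = sum F (G \<union> S)"
    using assms unfolding F_def S_def by (intro sum.mono_neutral_left) auto
  also have "\<dots> = sum F S"
  proof (rule sum.mono_neutral_right)
    show "\<forall>x\<in>G \<union> S - S. F x = 0"
    proof
      fix x assume "x \<in> G \<union> S - S"
      then obtain p q where x: "x = (p, q)" "(p, q) \<notin> S" by (cases x) auto
      then have "nat \<bar>p - i\<bar> + nat \<bar>q - j\<bar> \<noteq> 1" "\<not> (p = i \<and> q = j)"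
        using taxicab_unit_sphere[of p i q j] unfolding S_def by auto
      then show "F x = 0" unfolding F_def x five_point_weight_def by auto
    qed
  qed (use assms(1) S_def in auto)
  also have "sum F S = (4 * u i j - u (i + 1) j - u (i - 1) j - u i (j + 1) - u i (j - 1)) / h\<^sup>2"
    unfolding S_def F_def five_point_weight_def
    by (simp add: diff_divide_distrib add_divide_distrib algebra_simps)
  finally show ?thesis unfolding F_def .
qed

lemma tendsto_scheme_five_point:
  fixes u :: "int \<Rightarrow> int \<Rightarrow> real"
  assumes "0 < L" "0 < N" "\<forall>p q. (p, q) \<notin> grid_interior N \<longrightarrow> u p q = 0"
  shows "((\<lambda>\<alpha>. scheme \<alpha> L N u i j) \<longlongrightarrow>
      (4 * u i j - u (i + 1) j - u (i - 1) j - u i (j + 1) - u i (j - 1)) / (L / real N)\<^sup>2) (at_left 2)"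
proof -
  let ?w = "\<lambda>x. five_point_weight (L / real N) (nat \<bar>fst x - i\<bar>) (nat \<bar>snd x - j\<bar>)"
  have "finite (grid_interior N)" unfolding grid_interior_def by simp
  then have stencil: "(\<Sum>x\<in>grid_interior N. - ?w x * u (fst x) (snd x))
      = (4 * u i j - u (i + 1) j - u (i - 1) j - u i (j + 1) - u i (j - 1)) / (L / real N)\<^sup>2"
    using sum_five_point_weight[unfolded split_def] assms(3) by blast
  have "scheme \<alpha> L N u i j = (\<Sum>x\<in>grid_interior N.
      - (c2 \<alpha> * acoeff \<alpha> L N (nat \<bar>fst x - i\<bar>) (nat \<bar>snd x - j\<bar>)) * u (fst x) (snd x))" for \<alpha>
    unfolding scheme_def sum_distrib_left split_def by (simp add: algebra_simps)
  moreover have "((\<lambda>\<alpha>. \<Sum>x\<in>grid_interior N.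
      - (c2 \<alpha> * acoeff \<alpha> L N (nat \<bar>fst x - i\<bar>) (nat \<bar>snd x - j\<bar>)) * u (fst x) (snd x))
      \<longlongrightarrow> (\<Sum>x\<in>grid_interior N. - ?w x * u (fst x) (snd x))) (at_left 2)"
    by (intro tendsto_intros tendsto_c2_acoeff assms(1,2))
  ultimately show ?thesis
    unfolding stencil by simp
qed

theorem mainTheorem8:
  fixes L :: real and N :: nat
  assumes "L > 0" and "N > 0"
  defines "h \<equiv> L / real N"
  shows "((\<lambda>\<alpha>. c2 \<alpha> * acoef \<alpha> L N 1 0) \<longlongrightarrow> 1 / h\<^sup>2) (at_left 2) \<and>
         ((\<lambda>\<alpha>. c2 \<alpha> * acoef \<alpha> L N 0 1) \<longlongrightarrow> 1 / h\<^sup>2) (at_left 2) \<and>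
         (\<forall>m n :: nat. m + n > 1 \<longrightarrow> ((\<lambda>\<alpha>. c2 \<alpha> * acoef \<alpha> L N m n) \<longlongrightarrow> 0) (at_left 2)) \<and>
         ((\<lambda>\<alpha>. c2 \<alpha> * a00 \<alpha> L N) \<longlongrightarrow> - 4 / h\<^sup>2) (at_left 2) \<and>
         ((\<lambda>\<alpha>. c2 \<alpha> * Kint \<alpha> (cell h 0 0)) \<longlongrightarrow> 1) (at_left 2) \<and>
         (c2 \<longlongrightarrow> 0) (at_left 2) \<and>
         (\<forall>(u :: int \<Rightarrow> int \<Rightarrow> real) i j. (i, j) \<in> grid_interior N \<longrightarrow> (\<forall>p q. (p, q) \<notin> grid_interior N \<longrightarrow> u p q = 0) \<longrightarrow>
           ((\<lambda>\<alpha>. scheme \<alpha> L N u i j) \<longlongrightarrow>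
              (4 * u i j - u (i + 1) j - u (i - 1) j - u i (j + 1) - u i (j - 1)) / h\<^sup>2) (at_left 2))"
proof (intro conjI allI impI)
  note acoef = tendsto_c2_acoef[OF assms(1,2), folded h_def]
  show "((\<lambda>\<alpha>. c2 \<alpha> * acoef \<alpha> L N 1 0) \<longlongrightarrow> 1 / h\<^sup>2) (at_left 2)"
    and "((\<lambda>\<alpha>. c2 \<alpha> * acoef \<alpha> L N 0 1) \<longlongrightarrow> 1 / h\<^sup>2) (at_left 2)"
    using acoef[of 1 0] acoef[of 0 1] by (simp_all add: five_point_weight_def)
  show "((\<lambda>\<alpha>. c2 \<alpha> * acoef \<alpha> L N m n) \<longlongrightarrow> 0) (at_left 2)" if "m + n > 1" for m n
  proof -
    have "0 < m + n" "five_point_weight h m n = 0"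
      using that by (auto simp: five_point_weight_def)
    then show ?thesis using acoef[of m n] by simp
  qed
  show "((\<lambda>\<alpha>. c2 \<alpha> * a00 \<alpha> L N) \<longlongrightarrow> - 4 / h\<^sup>2) (at_left 2)"
    using tendsto_c2_a00[OF assms(1,2)] by (simp add: h_def five_point_weight_def)
  show "((\<lambda>\<alpha>. c2 \<alpha> * Kint \<alpha> (cell h 0 0)) \<longlongrightarrow> 1) (at_left 2)"
    using assms unfolding h_def
    by (intro tendsto_c2_Kint_square[of "L / real N"]) (auto simp: cell_0_0 Times_atLeastAtMost_borel)
  show "(c2 \<longlongrightarrow> 0) (at_left 2)" by (rule tendsto_c2_zero)
  show "((\<lambda>\<alpha>. scheme \<alpha> L N u i j) \<longlongrightarrow>
      (4 * u i j - u (i + 1) j - u (i - 1) j - u i (j + 1) - u i (j - 1)) / h\<^sup>2) (at_left 2)"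
    if "\<forall>p q. (p, q) \<notin> grid_interior N \<longrightarrow> u p q = 0" for u :: "int \<Rightarrow> int \<Rightarrow> real" and i j
    using tendsto_scheme_five_point[OF assms(1,2) that] unfolding h_def .
qed

end
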